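(* Let $N$ be a positive integer and let $f:\mathbb{N}\to\mathbb{C}$ be periodic with period $N$. Let $a_n(q)$ be the sequence of polynomials in $q$ defined recursively by \[ a_0(q)=0,\qquad a_n(q) = f(n) + \left(1-q^{n-1}\right)a_{n-1}(q) \quad \text{for } n\in\mathbb{N}. \] Set $\zeta_N:=e^{2\pi i/N}$ and, for integers $k$, \[ c_k := \frac{1}{N}\sum_{1\le j\le N} f(j)\,\zeta_N^{(1-j)k}. \] Then for $q\in\mathbb{C}$ with $|q|<1$ the limit below exists and \[ \lim_{n\rightarrow\infty}\left( \sum_{1\le\ell\le n} f(\ell) - a_n(q)\right) = c_0S_0(q) - (q;q)_\infty \sum_{1\le k\le N-1} \frac{c_k}{(\zeta_N^k;q)_\infty} + \sum_{1\le k\le N-1} \frac{c_k}{1-\zeta_N^k}. \]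
   Context: For $n\in\mathbb{N}_0\cup\{\infty\}$, $(a;q)_n := \prod_{j=0}^{n-1}(1-aq^j)$. $S_0(q):=\sum_{n\ge1}\sigma_0(n)q^n$, where $\sigma_0(n)=\sum_{d\mid n}1$ is the number of positive divisors of $n$. *)

theory Defs
  imports "HOL-Analysis.Analysis"
begin

fun a_seq :: "(nat \<Rightarrow> complex) \<Rightarrow> complex \<Rightarrow> nat \<Rightarrow> complex" where
  "a_seq f q 0 = 0"
| "a_seq f q (Suc n) = f (Suc n) + (1 - q ^ n) * a_seq f q n"

definition qpoch_inf :: "complex \<Rightarrow> complex \<Rightarrow> complex" where
  "qpoch_inf a q = (\<Prod>j. (1 - a * q ^ j))"

definition sigma0 :: "nat \<Rightarrow> nat" where
  "sigma0 n = card {d. d dvd n}"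

definition S0 :: "complex \<Rightarrow> complex" where
  "S0 q = (\<Sum>n. of_nat (sigma0 (Suc n)) * q ^ (Suc n))"

definition zetaN :: "nat \<Rightarrow> complex" where
  "zetaN N = exp (2 * of_real pi * \<i> / of_nat N)"

definition cN :: "(nat \<Rightarrow> complex) \<Rightarrow> nat \<Rightarrow> int \<Rightarrow> complex" where
  "cN f N k = (1 / of_nat N) * (\<Sum>j=1..N. f j * zetaN N powi ((1 - int j) * k))"

end

theory Submission
  imports Defs
begin

text \<open>
  Both sides are linear in f, and discrete Fourier inversion gives
  f(l) = sum_{k<N} c_k zeta^(k(l-1)) for l >= 1, so it suffices to treat f(l) = x^(l-1)
  with |x| <= 1. Then a_{n+1} = (q;q)_n sum_{m<=n} x^m/(q;q)_m is a rescaled partial sum of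
  Euler's series e(z) = sum_m z^m/(q;q)_m = 1/(z;q)_infinity. For x /= 1 the defect
  sum_{l<=n+1} x^(l-1) - a_{n+1} equals (1 - (q;q)_n sum_{m<=n} (xq)^m/(q;q)_m)/(1 - x),
  which tends to 1/(1 - x) - (q;q)_infinity/(x;q)_infinity. For x = 1 it equals
  (q;q)_n sum_{m<=n} m q^m/(q;q)_m, whose limit is z e'(z)/e(z) at z = q; the functional
  equation e(qz) = (1 - z) e(z) telescopes this logarithmic derivative into the Lambert
  series sum_j q^j/(1 - q^j), which is S_0(q) because both are the sum of q^(ij) over all
  pairs i, j >= 1, grouped by rows or by the value of ij.
\<close>

section \<open>Finite and infinite q-Pochhammer symbols\<close>

definition qpoch :: "complex \<Rightarrow> complex \<Rightarrow> nat \<Rightarrow> complex" where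
  "qpoch a q n = (\<Prod>j<n. 1 - a * q ^ j)"

lemma qpoch_0 [simp]: "qpoch a q 0 = 1"
  by (simp add: qpoch_def)

lemma qpoch_Suc: "qpoch a q (Suc n) = qpoch a q n * (1 - a * q ^ n)"
  by (simp add: qpoch_def)

lemma qpoch_q_Suc: "qpoch q q (Suc n) = qpoch q q n * (1 - q ^ Suc n)"
  by (simp add: qpoch_Suc)

lemma qpoch_Suc_shift: "qpoch a q (Suc n) = (1 - a) * qpoch (a * q) q n"
  unfolding qpoch_def prod.lessThan_Suc_shift by (simp add: mult.assoc)

lemma norm_mult_power_less_one:
  fixes a q :: "'a :: real_normed_div_algebra"
  assumes "norm a < 1" "norm q \<le> 1"
  shows "norm (a * q ^ n) < 1"
proof -
  have "norm (a * q ^ n) \<le> norm a"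
    using assms by (simp add: norm_mult norm_power mult_left_le power_le_one)
  with assms show ?thesis by simp
qed

lemma qpoch_nonzero:
  assumes "norm a < 1" "norm q \<le> 1"
  shows "qpoch a q n \<noteq> 0"
proof -
  have "a * q ^ j \<noteq> 1" for j
    using norm_mult_power_less_one[OF assms, of j] by auto
  then show ?thesis by (simp add: qpoch_def)
qed

lemma convergent_prod_qpoch:
  fixes a q :: complex
  assumes "norm q < 1"
  shows "convergent_prod (\<lambda>j. 1 - a * q ^ j)"
proof -
  have "summable (\<lambda>j. norm a * norm q ^ j)"
    using assms by (intro summable_mult summable_geometric) auto
  moreover have "norm ((1 - a * q ^ j) - 1) = norm a * norm q ^ j" for j
    by (simp add: norm_mult norm_power)
  ultimately have "summable (\<lambda>j. norm ((1 - a * q ^ j) - 1))"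
    by simp
  then show ?thesis
    by (intro abs_convergent_prod_imp_convergent_prod summable_imp_abs_convergent_prod)
qed

lemma qpoch_tendsto_qpoch_inf:
  assumes "norm q < 1"
  shows "qpoch a q \<longlonglongrightarrow> qpoch_inf a q"
  using convergent_prod_LIMSEQ[OF convergent_prod_qpoch[OF assms]]
  unfolding qpoch_def qpoch_inf_def LIMSEQ_lessThan_iff_atMost .

lemma qpoch_inf_shift:
  assumes "norm q < 1"
  shows "qpoch_inf a q = (1 - a) * qpoch_inf (a * q) q"
proof -
  have "(\<lambda>n. qpoch a q (Suc n)) \<longlonglongrightarrow> (1 - a) * qpoch_inf (a * q) q"
    unfolding qpoch_Suc_shift by (intro tendsto_mult_left qpoch_tendsto_qpoch_inf assms)
  then show ?thesis
    using LIMSEQ_unique LIMSEQ_Suc[OF qpoch_tendsto_qpoch_inf[OF assms]] by blast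
qed

lemma qpoch_inf_nonzero:
  assumes "norm a < 1" "norm q < 1"
  shows "qpoch_inf a q \<noteq> 0"
proof -
  have "a * q ^ j \<noteq> 1" for j
    using norm_mult_power_less_one[of a q j] assms by auto
  then show ?thesis
    unfolding qpoch_inf_def using assms by (intro prodinf_nonzero convergent_prod_qpoch) auto
qed

section \<open>Euler's q-exponential series\<close>

lemma summable_of_nat_mult_power:
  fixes z :: "'a :: {real_normed_field, banach}"
  assumes "norm z < 1"
  shows "summable (\<lambda>n. of_nat n * z ^ n)"
proof -
  have "summable (\<lambda>n. diffs (\<lambda>_. 1) n * z ^ n)"
    by (rule termdiff_converges[of z 1]) (use assms summable_geometric in auto)
  then have "summable (\<lambda>n. z * (of_nat (Suc n) * z ^ n))"
    by (intro summable_mult) (simp add: diffs_def)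
  then show ?thesis
    by (subst summable_Suc_iff[symmetric]) (simp add: algebra_simps)
qed

lemma
  fixes c :: "nat \<Rightarrow> 'a :: {real_normed_field, banach}"
  assumes "Bseq c" "norm z < 1"
  shows summable_powser_of_nat_mult_Bseq: "summable (\<lambda>m. of_nat m * c m * z ^ m)"
    and summable_powser_Bseq: "summable (\<lambda>m. c m * z ^ m)"
proof -
  obtain B where B: "B > 0" "\<And>m. norm (c m) \<le> B"
    using \<open>Bseq c\<close> by (auto simp: Bseq_def)
  have "summable (\<lambda>m. B * (of_nat m * norm z ^ m))"
    using summable_of_nat_mult_power[of "norm z"] assms by (intro summable_mult) auto
  moreover have "norm (of_nat m * c m * z ^ m) \<le> B * (of_nat m * norm z ^ m)" for m
  proof -
    have "of_nat m * norm (c m) * norm z ^ m \<le> of_nat m * B * norm z ^ m"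
      using B by (intro mult_right_mono mult_left_mono) auto
    then show ?thesis by (simp add: norm_mult norm_power mult_ac)
  qed
  ultimately show "summable (\<lambda>m. of_nat m * c m * z ^ m)"
    by (rule summable_comparison_test'[where N = 0])
  have "summable (\<lambda>m. B * norm z ^ m)"
    using assms by (intro summable_mult summable_geometric) auto
  moreover have "norm (c m * z ^ m) \<le> B * norm z ^ m" for m
    using B by (simp add: norm_mult norm_power mult_right_mono)
  ultimately show "summable (\<lambda>m. c m * z ^ m)"
    by (rule summable_comparison_test'[where N = 0])
qed

definition qexp :: "complex \<Rightarrow> complex \<Rightarrow> complex" where
  "qexp q z = (\<Sum>m. z ^ m / qpoch q q m)"

definition qexp_theta :: "complex \<Rightarrow> complex \<Rightarrow> complex" where
  "qexp_theta q z = (\<Sum>m. of_nat m * z ^ m / qpoch q q m)"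

lemma Bseq_inverse_qpoch:
  assumes "norm q < 1"
  shows "Bseq (\<lambda>m. 1 / qpoch q q m)"
proof -
  have "(\<lambda>m. 1 / qpoch q q m) \<longlonglongrightarrow> 1 / qpoch_inf q q"
    using assms qpoch_inf_nonzero[of q q]
    by (intro tendsto_divide tendsto_const qpoch_tendsto_qpoch_inf) auto
  then show ?thesis by (intro convergent_imp_Bseq convergentI)
qed

lemma
  assumes "norm q < 1" "norm z < 1"
  shows summable_qexp: "summable (\<lambda>m. z ^ m / qpoch q q m)"
    and summable_qexp_theta: "summable (\<lambda>m. of_nat m * z ^ m / qpoch q q m)"
  using summable_powser_Bseq[OF Bseq_inverse_qpoch[OF assms(1)] assms(2)]
    summable_powser_of_nat_mult_Bseq[OF Bseq_inverse_qpoch[OF assms(1)] assms(2)]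
  by simp_all

lemma qexp_0 [simp]: "qexp q 0 = 1"
  unfolding qexp_def by (subst powser_zero[of "\<lambda>m. 1 / qpoch q q m", simplified]) simp

lemma qexp_theta_0 [simp]: "qexp_theta q 0 = 0"
proof -
  have "(\<lambda>m. of_nat m * 0 ^ m / qpoch q q m) = (\<lambda>_. 0)"
    by (auto simp: fun_eq_iff power_0_left)
  then show ?thesis by (simp add: qexp_theta_def)
qed

lemma
  assumes "norm q < 1"
  shows isCont_qexp_0: "isCont (qexp q) 0"
    and isCont_qexp_theta_0: "isCont (qexp_theta q) 0"
proof -
  have "qexp q = (\<lambda>z. \<Sum>m. (1 / qpoch q q m) * z ^ m)"
    by (simp add: qexp_def fun_eq_iff)
  moreover have "summable (\<lambda>m. (1 / qpoch q q m) * (1/2) ^ m)"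
    using summable_qexp[OF assms, of "1/2"] by simp
  ultimately show "isCont (qexp q) 0"
    by (simp only:) (rule isCont_powser[where K = "1/2"]; simp)
  have "qexp_theta q = (\<lambda>z. \<Sum>m. (of_nat m / qpoch q q m) * z ^ m)"
    by (simp add: qexp_theta_def fun_eq_iff)
  moreover have "summable (\<lambda>m. (of_nat m / qpoch q q m) * (1/2) ^ m)"
    using summable_qexp_theta[OF assms, of "1/2"] by simp
  ultimately show "isCont (qexp_theta q) 0"
    by (simp only:) (rule isCont_powser[where K = "1/2"]; simp)
qed

lemma qexp_functional_equation:
  assumes q: "norm q < 1" and z: "norm z < 1"
  shows "qexp q (z * q) = (1 - z) * qexp q z"
proof -
  have zq: "norm (z * q) < 1"
    using norm_mult_power_less_one[of z q 1] q z by simp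
  define t where "t m = z ^ m / qpoch q q m - (z * q) ^ m / qpoch q q m" for m
  have "t sums (qexp q z - qexp q (z * q))"
    unfolding t_def qexp_def by (intro sums_diff summable_sums summable_qexp q z zq)
  moreover have "(\<lambda>m. t (Suc m)) sums (z * qexp q z)"
  proof -
    have "t (Suc m) = (1 - q ^ Suc m) * z ^ Suc m / qpoch q q (Suc m)" for m
      by (simp add: t_def power_mult_distrib diff_divide_distrib algebra_simps)
    also have "\<dots> m = z * (z ^ m / qpoch q q m)" for m
      using qpoch_nonzero[of q q "Suc m"] q by (simp add: qpoch_Suc)
    finally have "t (Suc m) = z * (z ^ m / qpoch q q m)" for m .
    then show ?thesis
      unfolding qexp_def by (simp only:) (rule sums_mult[OF summable_sums[OF summable_qexp[OF q z]]])
  qed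
  then have "t sums (z * qexp q z + t 0)"
    by (rule sums_Suc_iff[THEN iffD1])
  then have "t sums (z * qexp q z)"
    by (simp add: t_def)
  ultimately have "qexp q z - qexp q (z * q) = z * qexp q z"
    by (rule sums_unique2)
  then show ?thesis
    by (simp add: algebra_simps)
qed

lemma qexp_theta_functional_equation:
  assumes q: "norm q < 1" and z: "norm z < 1"
  shows "qexp_theta q (z * q) = (1 - z) * qexp_theta q z - z * qexp q z"
proof -
  have zq: "norm (z * q) < 1"
    using norm_mult_power_less_one[of z q 1] q z by simp
  define t where "t m = of_nat m * z ^ m / qpoch q q m - of_nat m * (z * q) ^ m / qpoch q q m"
    for m
  have "t sums (qexp_theta q z - qexp_theta q (z * q))"
    unfolding t_def qexp_theta_def by (intro sums_diff summable_sums summable_qexp_theta q z zq)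
  moreover have "(\<lambda>m. t (Suc m)) sums (z * qexp_theta q z + z * qexp q z)"
  proof -
    have "t (Suc m) = of_nat (Suc m) * (1 - q ^ Suc m) * z ^ Suc m / qpoch q q (Suc m)" for m
      by (simp add: t_def power_mult_distrib diff_divide_distrib algebra_simps)
    also have "\<dots> m = of_nat (Suc m) * z ^ Suc m / qpoch q q m" for m
      using qpoch_nonzero[of q q "Suc m"] q by (simp add: qpoch_Suc)
    also have "\<dots> m = z * (of_nat m * z ^ m / qpoch q q m) + z * (z ^ m / qpoch q q m)" for m
      by (simp add: add_divide_distrib algebra_simps)
    finally have "t (Suc m) = z * (of_nat m * z ^ m / qpoch q q m) + z * (z ^ m / qpoch q q m)"
      for m .
    then show ?thesis
      unfolding qexp_theta_def qexp_def
      by (simp only:) (intro sums_add sums_mult summable_sums summable_qexp summable_qexp_theta q z)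
  qed
  then have "t sums (z * qexp_theta q z + z * qexp q z + t 0)"
    by (rule sums_Suc_iff[THEN iffD1])
  then have "t sums (z * qexp_theta q z + z * qexp q z)"
    by (simp add: t_def)
  ultimately have "qexp_theta q z - qexp_theta q (z * q) = z * qexp_theta q z + z * qexp q z"
    by (rule sums_unique2)
  then show ?thesis
    by (simp add: algebra_simps)
qed

lemma qexp_mult_qpoch_inf:
  assumes q: "norm q < 1" and z: "norm z < 1"
  shows "qexp q z * qpoch_inf z q = 1"
proof -
  have step: "qexp q z * qpoch z q k = qexp q (z * q ^ k)" for k
  proof (induction k)
    case (Suc k)
    have "norm (z * q ^ k) < 1"
      using norm_mult_power_less_one[of z q k] q z by simp
    then have "qexp q (z * q ^ k * q) = (1 - z * q ^ k) * qexp q (z * q ^ k)"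
      by (rule qexp_functional_equation[OF q])
    moreover have "qexp q z * qpoch z q (Suc k) = (1 - z * q ^ k) * (qexp q z * qpoch z q k)"
      by (simp add: qpoch_Suc)
    ultimately show ?case
      using Suc.IH by (simp add: power_Suc2 mult.assoc del: power_Suc)
  qed simp
  have "(\<lambda>k. qexp q z * qpoch z q k) \<longlonglongrightarrow> qexp q z * qpoch_inf z q"
    by (intro tendsto_mult_left qpoch_tendsto_qpoch_inf q)
  moreover have "(\<lambda>k. z * q ^ k) \<longlonglongrightarrow> 0"
    using tendsto_mult_right_zero[OF LIMSEQ_power_zero[OF q]] by simp
  then have "(\<lambda>k. qexp q (z * q ^ k)) \<longlonglongrightarrow> qexp q 0"
    by (rule isCont_tendsto_compose[OF isCont_qexp_0[OF q]])
  ultimately show ?thesis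
    unfolding step by (auto dest: LIMSEQ_unique)
qed

section \<open>The Lambert series of the divisor function\<close>

lemma sums_qexp_theta_div_qexp:
  assumes q: "norm q < 1"
  shows "(\<lambda>j. q ^ Suc j / (1 - q ^ Suc j)) sums (qexp_theta q q / qexp q q)"
proof -
  define R where "R z = qexp_theta q z / qexp q z" for z
  have R_shift: "R z - R (z * q) = z / (1 - z)" if z: "norm z < 1" for z
  proof -
    have "qexp q z \<noteq> 0"
      using qexp_mult_qpoch_inf[OF q z] by auto
    moreover have "z \<noteq> 1"
      using z by auto
    ultimately show ?thesis
      unfolding R_def qexp_functional_equation[OF q z] qexp_theta_functional_equation[OF q z]
      by (simp add: field_simps)
  qed
  have to_0: "(\<lambda>j. q ^ Suc j) \<longlonglongrightarrow> 0"
    using LIMSEQ_Suc[OF LIMSEQ_power_zero[OF q]] .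
  have "(\<lambda>j. qexp_theta q (q ^ Suc j)) \<longlonglongrightarrow> qexp_theta q 0"
    by (rule isCont_tendsto_compose[OF isCont_qexp_theta_0[OF q] to_0])
  moreover have "(\<lambda>j. qexp q (q ^ Suc j)) \<longlonglongrightarrow> qexp q 0"
    by (rule isCont_tendsto_compose[OF isCont_qexp_0[OF q] to_0])
  ultimately have "(\<lambda>j. R (q ^ Suc j)) \<longlonglongrightarrow> 0"
    unfolding R_def using tendsto_divide by fastforce
  then have "(\<lambda>j. R (q ^ Suc j) - R (q ^ Suc (Suc j))) sums (R (q ^ Suc 0) - 0)"
    by (intro telescope_sums') simp
  moreover have "R (q ^ Suc j) - R (q ^ Suc (Suc j)) = q ^ Suc j / (1 - q ^ Suc j)" for j
    using R_shift[of "q ^ Suc j"] norm_mult_power_less_one[of q q j] q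
    by (simp add: power_Suc2 mult.commute del: power_Suc)
  ultimately show ?thesis
    by (simp add: R_def)
qed

lemma summable_on_power_mult_Suc:
  fixes q :: complex
  assumes q: "norm q < 1"
  shows "(\<lambda>(i, j). q ^ (Suc i * Suc j)) summable_on UNIV"
proof -
  define r where "r = norm q"
  have r: "0 \<le> r" "r < 1"
    using q by (auto simp: r_def)
  have "((\<lambda>j. r ^ i * r ^ j) has_sum (r ^ i / (1 - r))) UNIV" for i
  proof (rule sums_nonneg_imp_has_sum)
    show "(\<lambda>j. r ^ i * r ^ j) sums (r ^ i / (1 - r))"
      using sums_mult[OF geometric_sums[of r], of "r ^ i"] r by simp
  qed (use r in simp)
  moreover have "(\<lambda>i. r ^ i / (1 - r)) summable_on UNIV"
    using summable_divide[OF summable_geometric[of r], of "1 - r"] r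
    by (intro norm_summable_imp_summable_on) simp
  ultimately have "(\<lambda>(i, j). r ^ i * r ^ j) summable_on Sigma UNIV (\<lambda>_. UNIV)"
    by (intro summable_on_SigmaI[where g = "\<lambda>i. r ^ i / (1 - r)"]) (use r in auto)
  moreover have "(\<lambda>p. norm ((\<lambda>(i, j). r ^ i * r ^ j) p)) = (\<lambda>(i, j). r ^ i * r ^ j)"
    using r by (auto simp: fun_eq_iff)
  ultimately have "(\<lambda>p. norm ((\<lambda>(i, j). r ^ i * r ^ j) p)) summable_on UNIV"
    by simp
  then have "(\<lambda>p. norm ((\<lambda>(i, j). q ^ (Suc i * Suc j)) p)) summable_on UNIV"
  proof (rule Infinite_Sum.abs_summable_on_comparison_test)
    fix p :: "nat \<times> nat"
    obtain i j where p: "p = (i, j)"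
      by (cases p)
    have "r ^ (Suc i * Suc j) \<le> r ^ (i + j)"
      using r by (intro power_decreasing) auto
    then show "norm ((\<lambda>(i, j). q ^ (Suc i * Suc j)) p) \<le> norm ((\<lambda>(i, j). r ^ i * r ^ j) p)"
      using r by (simp add: p norm_mult norm_power r_def power_add)
  qed
  then show ?thesis
    by (rule abs_summable_summable)
qed

lemma has_sum_power_mult_Suc_rows:
  fixes q :: complex
  assumes q: "norm q < 1" and S: "((\<lambda>(i, j). q ^ (Suc i * Suc j)) has_sum S) UNIV"
  shows "((\<lambda>i. q ^ Suc i / (1 - q ^ Suc i)) has_sum S) UNIV"
proof (rule has_sum_SigmaD[where B = "\<lambda>_. UNIV"])
  show "((\<lambda>(i, j). q ^ (Suc i * Suc j)) has_sum S) (Sigma UNIV (\<lambda>_. UNIV))"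
    using S by simp
  fix i
  let ?c = "q ^ Suc i"
  have c: "norm ?c < 1"
    using norm_mult_power_less_one[of q q i] q by simp
  have row: "(\<lambda>j. (\<lambda>(i, j). q ^ (Suc i * Suc j)) (i, j)) = (\<lambda>j. ?c * ?c ^ j)"
    by (simp only: case_prod_conv mult_Suc_right power_add power_mult)
  have "summable (\<lambda>j. norm (?c * ?c ^ j))"
    using c by (simp add: norm_mult norm_power summable_geometric)
  moreover have "(\<lambda>j. ?c * ?c ^ j) sums (?c / (1 - ?c))"
    using sums_mult[OF geometric_sums[OF c], of ?c] by simp
  ultimately show "((\<lambda>j. (\<lambda>(i, j). q ^ (Suc i * Suc j)) (i, j)) has_sum ?c / (1 - ?c)) UNIV"
    unfolding row by (rule norm_summable_imp_has_sum)
qed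

lemma has_sum_power_mult_Suc_divisors:
  fixes q :: complex
  assumes S: "((\<lambda>(i, j). q ^ (Suc i * Suc j)) has_sum S) UNIV"
  shows "((\<lambda>n. of_nat (sigma0 (Suc n)) * q ^ Suc n) has_sum S) UNIV"
proof (rule has_sum_SigmaD[where B = "\<lambda>n. {d. d dvd Suc n}" and f = "\<lambda>(n, d). q ^ Suc n"])
  define h where "h = (\<lambda>(i, j). (Suc i * Suc j - 1, Suc i))"
  have "inj h"
    by (auto simp: h_def inj_def simp flip: mult_Suc)
  moreover have "h ` UNIV = Sigma UNIV (\<lambda>n. {d. d dvd Suc n})"
  proof (intro equalityI subsetI)
    fix p assume "p \<in> Sigma UNIV (\<lambda>n. {d. d dvd Suc n})"
    then obtain n d e where p: "p = (n, d)" and "Suc n = d * e"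
      by (auto elim!: dvdE)
    then obtain i j where "d = Suc i" "e = Suc j"
      by (metis mult_is_0 not0_implies_Suc nat.distinct(1))
    with p \<open>Suc n = d * e\<close> have "p = h (i, j)"
      by (simp add: h_def)
    then show "p \<in> h ` UNIV" by blast
  next
    fix p assume "p \<in> h ` UNIV"
    then obtain i j where "p = h (i, j)" by auto
    moreover have "Suc i dvd Suc (Suc i * Suc j - 1)"
      by (simp only: Suc_diff_1 nat_0_less_mult_iff zero_less_Suc conj_absorb dvd_triv_left)
    ultimately show "p \<in> Sigma UNIV (\<lambda>n. {d. d dvd Suc n})"
      by (simp add: h_def)
  qed
  moreover have "(\<lambda>(n, d). q ^ Suc n) \<circ> h = (\<lambda>(i, j). q ^ (Suc i * Suc j))"
    by (simp add: h_def fun_eq_iff)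
  ultimately show "((\<lambda>(n, d). q ^ Suc n) has_sum S) (Sigma UNIV (\<lambda>n. {d. d dvd Suc n}))"
    using S has_sum_reindex by metis
  fix n
  show "((\<lambda>d. (\<lambda>(n, d). q ^ Suc n) (n, d)) has_sum of_nat (sigma0 (Suc n)) * q ^ Suc n)
      {d. d dvd Suc n}"
    using has_sum_finite[of "{d. d dvd Suc n}" "\<lambda>_. q ^ Suc n"] by (simp add: sigma0_def)
qed

lemma lambert_series_sigma0:
  assumes q: "norm q < 1"
  shows "(\<lambda>j. q ^ Suc j / (1 - q ^ Suc j)) sums S0 q"
proof -
  obtain S where S: "((\<lambda>(i, j). q ^ (Suc i * Suc j)) has_sum S) UNIV"
    using summable_on_power_mult_Suc[OF q] unfolding summable_on_def by blast
  have "(\<lambda>j. q ^ Suc j / (1 - q ^ Suc j)) sums S"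
    using has_sum_imp_sums[OF has_sum_power_mult_Suc_rows[OF q S]] .
  moreover have "S0 q = S"
    using has_sum_imp_sums[OF has_sum_power_mult_Suc_divisors[OF S]] by (simp add: S0_def sums_iff)
  ultimately show ?thesis
    by simp
qed

section \<open>The recursion for geometric sequences\<close>

definition a_defect :: "(nat \<Rightarrow> complex) \<Rightarrow> complex \<Rightarrow> nat \<Rightarrow> complex" where
  "a_defect f q n = (\<Sum>l=1..n. f l) - a_seq f q n"

lemma a_seq_geometric:
  assumes "norm q < 1"
  shows "a_seq (\<lambda>l. x ^ (l - 1)) q (Suc n) = qpoch q q n * (\<Sum>m\<le>n. x ^ m / qpoch q q m)"
proof (induction n)
  case (Suc n)
  have "qpoch q q (Suc n) \<noteq> 0"
    using qpoch_nonzero[of q q] assms by simp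
  then have "qpoch q q (Suc n) * (x ^ Suc n / qpoch q q (Suc n)) = x ^ Suc n"
    by simp
  then show ?case
    using Suc.IH by (simp add: qpoch_q_Suc distrib_left del: power_Suc)
qed simp

lemma qexp_partial_sum_shift:
  assumes "norm q < 1"
  shows "(1 - x) * (\<Sum>m\<le>n. x ^ m / qpoch q q m)
           = (\<Sum>m\<le>n. (x * q) ^ m / qpoch q q m) - x ^ Suc n / qpoch q q n"
proof (induction n)
  case (Suc n)
  define c where "c = q ^ Suc n"
  have P: "qpoch q q (Suc n) = qpoch q q n * (1 - c)"
    by (simp add: c_def qpoch_q_Suc del: power_Suc)
  with qpoch_nonzero[of q q "Suc n"] assms have "qpoch q q n \<noteq> 0" "1 - c \<noteq> 0"
    by auto
  moreover have xq: "(x * q) ^ Suc n = c * x ^ Suc n"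
    by (simp add: c_def power_mult_distrib del: power_Suc)
  ultimately have key: "(1 - x) * (x ^ Suc n / qpoch q q (Suc n)) - x ^ Suc n / qpoch q q n
      = (x * q) ^ Suc n / qpoch q q (Suc n) - x ^ Suc (Suc n) / qpoch q q (Suc n)"
    unfolding P xq power_Suc[of x "Suc n"] by (simp add: divide_simps) (simp add: algebra_simps)
  have "(1 - x) * (\<Sum>m\<le>Suc n. x ^ m / qpoch q q m)
      = (1 - x) * (\<Sum>m\<le>n. x ^ m / qpoch q q m) + (1 - x) * (x ^ Suc n / qpoch q q (Suc n))"
    by (simp add: distrib_left del: power_Suc)
  also have "\<dots> = (\<Sum>m\<le>n. (x * q) ^ m / qpoch q q m)
      + ((1 - x) * (x ^ Suc n / qpoch q q (Suc n)) - x ^ Suc n / qpoch q q n)"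
    unfolding Suc.IH by simp
  also have "\<dots> = (\<Sum>m\<le>Suc n. (x * q) ^ m / qpoch q q m) - x ^ Suc (Suc n) / qpoch q q (Suc n)"
    unfolding key by (simp del: power_Suc)
  finally show ?case .
qed simp

lemma of_nat_Suc_div_qpoch:
  assumes "norm q < 1"
  shows "of_nat (Suc n) / qpoch q q n = (\<Sum>m\<le>n. (1 + of_nat m * q ^ m) / qpoch q q m)"
proof (induction n)
  case (Suc n)
  define c where "c = q ^ Suc n"
  have P: "qpoch q q (Suc n) = qpoch q q n * (1 - c)"
    by (simp add: c_def qpoch_q_Suc del: power_Suc)
  with qpoch_nonzero[of q q "Suc n"] assms have "qpoch q q n \<noteq> 0" "1 - c \<noteq> 0"
    by auto
  then have "of_nat (Suc (Suc n)) / qpoch q q (Suc n)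
      = of_nat (Suc n) / qpoch q q n + (1 + of_nat (Suc n) * c) / qpoch q q (Suc n)"
    unfolding P by (simp add: divide_simps) (simp add: algebra_simps)
  then show ?case
    using Suc.IH by (simp add: c_def del: power_Suc)
qed simp

lemma sum_geometric_from_1:
  fixes x :: "'a :: comm_ring_1"
  shows "(1 - x) * (\<Sum>l=1..n. x ^ (l - 1)) = 1 - x ^ n"
  using power_diff_1_eq[of x n]
  by (simp add: sum.atLeast1_atMost_eq[where g = "\<lambda>l. x ^ (l - 1)", simplified] algebra_simps)

lemma a_defect_geometric_Suc:
  assumes "norm q < 1" "x \<noteq> 1"
  shows "a_defect (\<lambda>l. x ^ (l - 1)) q (Suc n)
           = (1 - qpoch q q n * (\<Sum>m\<le>n. (x * q) ^ m / qpoch q q m)) / (1 - x)"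
proof -
  have "qpoch q q n \<noteq> 0"
    using qpoch_nonzero[of q q] assms by simp
  have "(1 - x) * a_defect (\<lambda>l. x ^ (l - 1)) q (Suc n)
      = (1 - x) * (\<Sum>l=1..Suc n. x ^ (l - 1))
        - qpoch q q n * ((1 - x) * (\<Sum>m\<le>n. x ^ m / qpoch q q m))"
    by (simp only: a_defect_def a_seq_geometric[OF assms(1)] algebra_simps)
  also have "\<dots> = (1 - x ^ Suc n)
      - qpoch q q n * ((\<Sum>m\<le>n. (x * q) ^ m / qpoch q q m) - x ^ Suc n / qpoch q q n)"
    by (simp only: sum_geometric_from_1 qexp_partial_sum_shift[OF assms(1)])
  also have "\<dots> = 1 - qpoch q q n * (\<Sum>m\<le>n. (x * q) ^ m / qpoch q q m)"
    using \<open>qpoch q q n \<noteq> 0\<close> by (simp add: right_diff_distrib)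
  finally show ?thesis
    using assms(2) by (simp add: field_simps)
qed

lemma a_defect_one_Suc:
  assumes "norm q < 1"
  shows "a_defect (\<lambda>_. 1) q (Suc n) = qpoch q q n * (\<Sum>m\<le>n. of_nat m * q ^ m / qpoch q q m)"
proof -
  have "qpoch q q n \<noteq> 0"
    using qpoch_nonzero[of q q] assms by simp
  then have "of_nat (Suc n) = qpoch q q n * (\<Sum>m\<le>n. (1 + of_nat m * q ^ m) / qpoch q q m)"
    by (simp flip: of_nat_Suc_div_qpoch[OF assms])
  moreover have "a_seq (\<lambda>_. 1) q (Suc n) = qpoch q q n * (\<Sum>m\<le>n. 1 / qpoch q q m)"
    using a_seq_geometric[OF assms, of 1] by simp
  ultimately show ?thesis
    by (simp add: a_defect_def add_divide_distrib sum.distrib algebra_simps)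
qed

lemma a_defect_geometric_tendsto:
  assumes q: "norm q < 1" and x: "norm x \<le> 1" "x \<noteq> 1"
  shows "a_defect (\<lambda>l. x ^ (l - 1)) q \<longlonglongrightarrow> 1 / (1 - x) - qpoch_inf q q / qpoch_inf x q"
proof -
  have xq: "norm (x * q) < 1"
    using norm_mult_power_less_one[of q x 1] q x by (simp add: mult.commute)
  have "(\<lambda>n. a_defect (\<lambda>l. x ^ (l - 1)) q (Suc n))
      \<longlonglongrightarrow> (1 - qpoch_inf q q * qexp q (x * q)) / (1 - x)"
    unfolding a_defect_geometric_Suc[OF q x(2)] qexp_def
    using x(2) by (intro tendsto_intros qpoch_tendsto_qpoch_inf q summable_LIMSEQ' summable_qexp xq) simp
  moreover have "qexp q (x * q) = inverse (qpoch_inf (x * q) q)"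
    using inverse_unique[OF qexp_mult_qpoch_inf[OF q xq]] by (metis inverse_inverse_eq)
  then have "(1 - qpoch_inf q q * qexp q (x * q)) / (1 - x)
      = 1 / (1 - x) - qpoch_inf q q / qpoch_inf x q"
    unfolding qpoch_inf_shift[OF q, of x]
    by (simp add: divide_inverse inverse_mult_distrib) (simp add: algebra_simps)
  ultimately show ?thesis
    using LIMSEQ_imp_Suc by metis
qed

lemma a_defect_one_tendsto:
  assumes q: "norm q < 1"
  shows "a_defect (\<lambda>_. 1) q \<longlonglongrightarrow> S0 q"
proof -
  have "(\<lambda>n. a_defect (\<lambda>_. 1) q (Suc n)) \<longlonglongrightarrow> qpoch_inf q q * qexp_theta q q"
    unfolding a_defect_one_Suc[OF q] qexp_theta_def
    by (intro tendsto_intros qpoch_tendsto_qpoch_inf q summable_LIMSEQ' summable_qexp_theta q)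
  moreover have "qpoch_inf q q * qexp_theta q q = qexp_theta q q / qexp q q"
    using inverse_unique[OF qexp_mult_qpoch_inf[OF q q]] by (simp add: divide_inverse)
  moreover have "qexp_theta q q / qexp q q = S0 q"
    using sums_qexp_theta_div_qexp[OF q] lambert_series_sigma0[OF q] by (rule sums_unique2)
  ultimately show ?thesis
    using LIMSEQ_imp_Suc by metis
qed

lemma a_defect_linear_combination:
  assumes "\<And>l. 1 \<le> l \<Longrightarrow> f l = (\<Sum>k\<in>K. c k * g k l)"
  shows "a_defect f q n = (\<Sum>k\<in>K. c k * a_defect (g k) q n)"
proof -
  have "a_seq f q n = (\<Sum>k\<in>K. c k * a_seq (g k) q n)"
  proof (induction n)
    case (Suc n)
    then show ?case
      by (simp add: assms sum.distrib sum_distrib_left mult.left_commute distrib_left)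
  qed simp
  moreover have "(\<Sum>l=1..n. f l) = (\<Sum>k\<in>K. c k * (\<Sum>l=1..n. g k l))"
    by (simp add: assms sum_distrib_left sum.swap[of _ K])
  ultimately show ?thesis
    by (simp add: a_defect_def right_diff_distrib sum_subtractf)
qed

section \<open>Discrete Fourier expansion of periodic sequences\<close>

lemma zetaN_pow: "zetaN N ^ j = exp (2 * of_real pi * \<i> * of_nat j / of_nat N)"
  unfolding zetaN_def exp_of_nat_mult[symmetric] by (simp add: field_simps)

lemma norm_zetaN_pow [simp]: "norm (zetaN N ^ j) = 1"
  by (simp add: zetaN_pow norm_exp_eq_Re)

lemma zetaN_pow_eq_1_iff:
  assumes "N > 0"
  shows "zetaN N ^ j = 1 \<longleftrightarrow> N dvd j"
  unfolding zetaN_pow using complex_root_unity_eq_1[of N j] assms by simp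

lemma zetaN_powi_eq_pow_mod:
  assumes "N > 0"
  shows "zetaN N powi m = zetaN N ^ nat (m mod int N)"
proof -
  have "zetaN N powi m = zetaN N powi (m mod int N) * zetaN N powi (int N * (m div int N))"
    by (simp add: zetaN_def flip: power_int_add)
  also have "zetaN N powi (int N * (m div int N)) = 1"
    using zetaN_pow_eq_1_iff[OF assms, of N] by (simp add: power_int_mult)
  also have "zetaN N powi (m mod int N) = zetaN N ^ nat (m mod int N)"
    using assms by (metis power_int_of_nat pos_mod_sign of_nat_0_less_iff nat_0_le)
  finally show ?thesis
    by simp
qed

lemma sum_powers_zetaN_powi:
  assumes "N > 0"
  shows "(\<Sum>k<N. (zetaN N powi m) ^ k) = (if int N dvd m then of_nat N else 0)"
proof -
  define r where "r = nat (m mod int N)"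
  have w: "zetaN N powi m = zetaN N ^ r"
    unfolding r_def by (rule zetaN_powi_eq_pow_mod[OF assms])
  have "(zetaN N ^ r) ^ N = 1"
    using zetaN_pow_eq_1_iff[OF assms] by (simp flip: power_mult)
  moreover have "zetaN N ^ r = 1 \<longleftrightarrow> int N dvd m"
  proof -
    have "r < N"
      using assms by (simp add: r_def nat_less_iff)
    then have "N dvd r \<longleftrightarrow> r = 0"
      using nat_dvd_not_less by auto
    also have "\<dots> \<longleftrightarrow> m mod int N = 0"
      using assms by (simp add: r_def nat_eq_iff)
    finally show ?thesis
      unfolding zetaN_pow_eq_1_iff[OF assms] by (simp add: dvd_eq_mod_eq_0)
  qed
  ultimately show ?thesis
    unfolding w sum_gp_strict by auto
qed

lemma periodic_mod:
  fixes f :: "nat \<Rightarrow> 'a"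
  assumes "\<And>n. f (n + N) = f n"
  shows "f (n mod N) = f n"
proof -
  have "f (r + m * N) = f r" for r m
  proof (induction m)
    case (Suc m)
    have "f (r + Suc m * N) = f ((r + m * N) + N)"
      by (simp add: algebra_simps)
    then show ?case
      using Suc.IH assms by simp
  qed simp
  then show ?thesis
    by (metis mod_div_mult_eq)
qed

lemma zetaN_powi_exponent:
  assumes "1 \<le> l"
  shows "zetaN N powi ((1 - int j) * int k) * (zetaN N ^ k) ^ (l - 1)
           = (zetaN N powi (int l - int j)) ^ k"
proof -
  let ?z = "zetaN N"
  have "?z \<noteq> 0"
    by (simp add: zetaN_def)
  have "(?z ^ k) ^ (l - 1) = ?z powi (int k * int (l - 1))"
    by (simp only: power_mult[symmetric] of_nat_mult[symmetric] power_int_of_nat)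
  then have "?z powi ((1 - int j) * int k) * (?z ^ k) ^ (l - 1)
      = ?z powi ((1 - int j) * int k + int k * int (l - 1))"
    using \<open>?z \<noteq> 0\<close> by (simp add: power_int_add)
  also have "(1 - int j) * int k + int k * int (l - 1) = (int l - int j) * int k"
    using assms by (simp add: of_nat_diff algebra_simps)
  finally show ?thesis
    by (simp add: power_int_mult)
qed

lemma int_dvd_diff_iff_eq_mod_Suc:
  assumes "1 \<le> l" "j \<in> {1..N}"
  shows "int N dvd (int l - int j) \<longleftrightarrow> j = (l - 1) mod N + 1"
proof -
  have "int l - int j = int (l - 1) - int (j - 1)"
    using assms by simp
  then have "int N dvd (int l - int j) \<longleftrightarrow> int (l - 1) mod int N = int (j - 1) mod int N"
    by (simp only: mod_eq_dvd_iff)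
  also have "\<dots> \<longleftrightarrow> (l - 1) mod N = j - 1"
    using assms(2) by (simp flip: of_nat_mod) arith
  finally show ?thesis
    using assms(2) by auto
qed

lemma periodic_fourier_expansion:
  assumes N: "N > 0" and per: "\<And>n. f (n + N) = f n" and l: "1 \<le> l"
  shows "f l = (\<Sum>k<N. cN f N (int k) * (zetaN N ^ k) ^ (l - 1))"
proof -
  define j0 where "j0 = (l - 1) mod N + 1"
  have j0: "j0 \<in> {1..N}"
    using N by (simp add: j0_def Suc_leI)
  have "cN f N (int k) * (zetaN N ^ k) ^ (l - 1)
      = (1 / of_nat N) * (\<Sum>j=1..N. f j * (zetaN N powi (int l - int j)) ^ k)" for k
    unfolding cN_def by (simp only: sum_distrib_right mult.assoc zetaN_powi_exponent[OF l])
  then have "(\<Sum>k<N. cN f N (int k) * (zetaN N ^ k) ^ (l - 1))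
      = (1 / of_nat N) * (\<Sum>j=1..N. f j * (\<Sum>k<N. (zetaN N powi (int l - int j)) ^ k))"
    by (simp only: sum_distrib_left sum.swap[of _ "{..<N}"])
  also have "\<dots> = (1 / of_nat N) * (\<Sum>j=1..N. if j = j0 then f j * of_nat N else 0)"
    unfolding sum_powers_zetaN_powi[OF N] j0_def using int_dvd_diff_iff_eq_mod_Suc[OF l]
    by (intro arg_cong[where f = "(*) _"] sum.cong) auto
  also have "\<dots> = f j0"
    using j0 N by simp
  also have "f j0 = f l"
  proof -
    have "f (Suc (n + N)) = f (Suc n)" for n
      using per[of "Suc n"] by simp
    then show ?thesis
      using periodic_mod[of "\<lambda>n. f (Suc n)" N "l - 1"] l by (simp add: j0_def)
  qed
  finally show ?thesis ..
qed

lemma a_defect_zetaN_pow_tendsto: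
  assumes "norm q < 1" "0 < k" "k < N"
  shows "a_defect (\<lambda>l. (zetaN N ^ k) ^ (l - 1)) q
           \<longlonglongrightarrow> 1 / (1 - zetaN N ^ k) - qpoch_inf q q / qpoch_inf (zetaN N ^ k) q"
proof (rule a_defect_geometric_tendsto)
  show "zetaN N ^ k \<noteq> 1"
    using assms by (auto simp: zetaN_pow_eq_1_iff dest: dvd_imp_le)
qed (use assms in simp_all)

lemma a_defect_periodic_expansion:
  assumes N: "N > 0" and per: "\<And>n. f (n + N) = f n"
  shows "a_defect f q n = cN f N 0 * a_defect (\<lambda>_. 1) q n
           + (\<Sum>k=1..N-1. cN f N (int k) * a_defect (\<lambda>l. (zetaN N ^ k) ^ (l - 1)) q n)"
proof -
  have "a_defect f q n = (\<Sum>k<N. cN f N (int k) * a_defect (\<lambda>l. (zetaN N ^ k) ^ (l - 1)) q n)"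
    by (rule a_defect_linear_combination) (rule periodic_fourier_expansion[of N f, OF N per])
  moreover have "{..<N} = insert 0 {1..N-1}"
    using N by auto
  ultimately show ?thesis
    by simp
qed

theorem theorem1p3:
  fixes N :: nat and f :: "nat \<Rightarrow> complex" and q :: complex
  assumes "N > 0"
    and "\<And>n. f (n + N) = f n"
    and "norm q < 1"
  shows "(\<lambda>n. (\<Sum>l=1..n. f l) - a_seq f q n) \<longlonglongrightarrow>
           cN f N 0 * S0 q
           - qpoch_inf q q * (\<Sum>k=1..N-1. cN f N (int k) / qpoch_inf (zetaN N ^ k) q)
           + (\<Sum>k=1..N-1. cN f N (int k) / (1 - zetaN N ^ k))"
proof -
  note q = assms(3)
  let ?z = "zetaN N" and ?c = "\<lambda>k. cN f N (int k)"
  have "a_defect f q = (\<lambda>n. cN f N 0 * a_defect (\<lambda>_. 1) q n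
      + (\<Sum>k=1..N-1. ?c k * a_defect (\<lambda>l. (?z ^ k) ^ (l - 1)) q n))"
    by (intro ext a_defect_periodic_expansion[of N f, OF assms(1,2)])
  moreover have "\<dots> \<longlonglongrightarrow> cN f N 0 * S0 q
      + (\<Sum>k=1..N-1. ?c k * (1 / (1 - ?z ^ k) - qpoch_inf q q / qpoch_inf (?z ^ k) q))"
    by (intro tendsto_add tendsto_mult_left tendsto_sum a_defect_one_tendsto[OF q]
        a_defect_zetaN_pow_tendsto[OF q]) auto
  moreover have "cN f N 0 * S0 q
      + (\<Sum>k=1..N-1. ?c k * (1 / (1 - ?z ^ k) - qpoch_inf q q / qpoch_inf (?z ^ k) q))
      = cN f N 0 * S0 q - qpoch_inf q q * (\<Sum>k=1..N-1. ?c k / qpoch_inf (?z ^ k) q)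
        + (\<Sum>k=1..N-1. ?c k / (1 - ?z ^ k))"
    by (simp add: sum_distrib_left sum_subtractf right_diff_distrib mult.commute)
  ultimately have "a_defect f q \<longlonglongrightarrow> cN f N 0 * S0 q
      - qpoch_inf q q * (\<Sum>k=1..N-1. ?c k / qpoch_inf (?z ^ k) q) + (\<Sum>k=1..N-1. ?c k / (1 - ?z ^ k))"
    by (simp only:)
  then show ?thesis
    unfolding a_defect_def[abs_def] .
qed

end
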